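(* Let $\pi,\rho\in S_k$. Then: (1) $\kappa^\rho_\pi(\mathbf w)$ is a rational function with at most simple poles at $w_i=w_j$ ($i<j$) and no other singularities; i.e. $\prod_{i<j}(w_j-w_i)\kappa^\rho_\pi(\mathbf w)$ is a polynomial in $w_1,\dots,w_k$. (2) If $a<b$ and $\rho^{-1}(a)>\rho^{-1}(b)$, then $\kappa^\rho_\pi(\mathbf w)|_{w_a=z,\,w_b=qz}=0$. (3) If $\pi(\rho^{-1}(a))<a$ then $\kappa^\rho_\pi(\mathbf w)|_{w_a=0}=0$; if $\pi(\rho^{-1}(a))>a$ then $\kappa^\rho_\pi(\mathbf w)|_{w_a\to\infty}=0$.
   Context: $q$ is a fixed parameter (in $(0,1)$). For $\rho\in S_k$, $t_\rho f(w_1,\dots,w_k)=f(w_{\rho(1)},\dots,w_{\rho(k)})$; $T_i=q+\frac{w_{i+1}-qw_i}{w_{i+1}-w_i}(t_{\sigma_i}-1)$ where $\sigma_i$ is the transposition of $i,i+1$; $T_\pi=T_{i_1}\cdots T_{i_l}$ for a reduced word $\pi=\sigma_{i_1}\cdots\sigma_{i_l}$. The rational functions $\kappa^\rho_\pi(\mathbf w)$ are defined by $T_\pi=\sum_{\rho\in S_k}\kappa^\rho_\pi(\mathbf w)t_\rho$. *)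

theory Defs
  imports "HOL-Analysis.Analysis" "HOL-Combinatorics.Combinatorics"
begin

text \<open>Indices are 0-based: variables w 0, ..., w (k-1); permutations of {..<k};
  the simple transposition sigma_i swaps i and i+1 (for i+1 < k).
  A point w is a function nat => complex; t_rho f (w) = f (w o rho).\<close>

definition sigma :: "nat \<Rightarrow> nat \<Rightarrow> nat" where
  "sigma i = Transposition.transpose i (Suc i)"

definition word_perm :: "nat list \<Rightarrow> nat \<Rightarrow> nat" where
  "word_perm is = foldr (\<lambda>i p. sigma i \<circ> p) is id"

definition valid_word :: "nat \<Rightarrow> nat list \<Rightarrow> bool" where
  "valid_word k is \<longleftrightarrow> (\<forall>i\<in>set is. Suc i < k)"

definition reduced_word :: "nat \<Rightarrow> nat list \<Rightarrow> (nat \<Rightarrow> nat) \<Rightarrow> bool" where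
  "reduced_word k is \<pi> \<longleftrightarrow> valid_word k is \<and> word_perm is = \<pi> \<and>
     (\<forall>js. valid_word k js \<and> word_perm js = \<pi> \<longrightarrow> length is \<le> length js)"

definition T_op :: "real \<Rightarrow> nat \<Rightarrow> ((nat \<Rightarrow> complex) \<Rightarrow> complex) \<Rightarrow> (nat \<Rightarrow> complex) \<Rightarrow> complex" where
  "T_op q i f w = of_real q * f w
     + ((w (Suc i) - of_real q * w i) / (w (Suc i) - w i)) * (f (w \<circ> sigma i) - f w)"

fun T_word :: "real \<Rightarrow> nat list \<Rightarrow> ((nat \<Rightarrow> complex) \<Rightarrow> complex) \<Rightarrow> (nat \<Rightarrow> complex) \<Rightarrow> complex" where
  "T_word q [] f = f"
| "T_word q (i # is) f = T_op q i (T_word q is f)"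

text \<open>kappa: the coefficients in T_pi = sum_rho kappa^rho_pi(w) t_rho, evaluated at a point w
  with pairwise distinct coordinates (where the coefficients are uniquely determined).\<close>
definition kappa :: "nat \<Rightarrow> real \<Rightarrow> nat list \<Rightarrow> (nat \<Rightarrow> nat) \<Rightarrow> (nat \<Rightarrow> complex) \<Rightarrow> complex" where
  "kappa k q is \<rho> w =
     (THE c. (\<forall>\<tau>. \<not> \<tau> permutes {..<k} \<longrightarrow> c \<tau> = 0) \<and>
        (\<forall>f. T_word q is f w = (\<Sum>\<tau>\<in>{\<tau>. \<tau> permutes {..<k}}. c \<tau> * f (w \<circ> \<tau>)))) \<rho>"

end

theory Submission
  imports Defs
begin

(* Right multiplication by T_j gives a recursion for the coefficients along a word:
   kappa^rho_{is j} = kappa^rho_is (q - b_j(w o rho)) + kappa^{rho s_j}_is b_j(w o rho o s_j), with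
   b_j(v) = (v_{j+1} - q v_j) / (v_{j+1} - v_j).  Parts (2) and (3) follow by induction on the word,
   peeling off its last letter j: in the one case where the assertion is not inherited from the
   shorter word, the factor b_j, resp. q - b_j, vanishes at w_b = q w_a, at w_a = 0, or as
   w_a -> infinity.  For (3) this needs that the last letter of a reduced word is an ascent of the
   remaining prefix, which is proved by counting inversions.

   For (1), T_i maps polynomials to polynomials, because f o s_i - f is divisible by
   w_{i+1} - w_i.  Applying T_pi in x to the polynomial prod_{i<j} (x_{rho^-1 j} - w_i), whose value
   at x = w o tau is the Vandermonde product Delta(w) for tau = rho and 0 for every other
   permutation tau, exhibits Delta(w) kappa^rho_pi(w) as a polynomial in w. *)

section \<open>Simple transpositions and words\<close>

lemma sigma_apply [simp]: "sigma j j = Suc j" "sigma j (Suc j) = j"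
  by (simp_all add: sigma_def)

lemma sigma_sigma [simp]: "sigma i (sigma i x) = x"
  by (simp add: sigma_def)

lemma comp_sigma_sigma [simp]: "f \<circ> sigma i \<circ> sigma i = f"
  by (simp add: fun_eq_iff)

lemma sigma_permutes: "Suc i < k \<Longrightarrow> sigma i permutes {..<k}"
  unfolding sigma_def by (rule permutes_swap_id) auto

lemma sigma_less_sigma: "x < y \<Longrightarrow> (x, y) \<noteq> (j, Suc j) \<Longrightarrow> sigma j x < sigma j y"
  by (auto simp: sigma_def Transposition.transpose_def)

lemma inv_comp_sigma: "\<rho> permutes S \<Longrightarrow> inv (\<rho> \<circ> sigma j) x = sigma j (inv \<rho> x)"
  by (simp add: o_inv_distrib permutes_bij sigma_def)

lemma valid_word_snoc [simp]: "valid_word k (is @ [j]) \<longleftrightarrow> valid_word k is \<and> Suc j < k"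
  by (auto simp: valid_word_def)

lemma word_perm_Nil [simp]: "word_perm [] = id"
  by (simp add: word_perm_def)

lemma word_perm_append: "word_perm (is @ js) = word_perm is \<circ> word_perm js"
  by (induction "is") (auto simp: word_perm_def)

lemma word_perm_snoc: "word_perm (is @ [j]) = word_perm is \<circ> sigma j"
proof -
  have "word_perm [j] = sigma j"
    by (simp add: word_perm_def)
  then show ?thesis
    by (simp add: word_perm_append)
qed

lemma word_perm_permutes: "valid_word k is \<Longrightarrow> word_perm is permutes {..<k}"
  by (induction "is") (auto simp: valid_word_def word_perm_def
      intro!: permutes_compose sigma_permutes)

section \<open>Inversions and reduced words\<close>

definition inversions :: "nat \<Rightarrow> (nat \<Rightarrow> nat) \<Rightarrow> (nat \<times> nat) set" where
  "inversions k p = {(x, y). x < y \<and> y < k \<and> p y < p x}"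

lemma inversions_id [simp]: "inversions k id = {}"
  by (auto simp: inversions_def)

lemma finite_inversions: "finite (inversions k p)"
  by (rule finite_subset[of _ "{..<k} \<times> {..<k}"]) (auto simp: inversions_def)

lemma card_inversions_comp_sigma:
  assumes j: "Suc j < k"
  shows "card (inversions k (p \<circ> sigma j)) + (if p (Suc j) < p j then 1 else 0)
       = card (inversions k p) + (if p j < p (Suc j) then 1 else 0)"
proof -
  let ?J = "{(j, Suc j)}" and ?s = "map_prod (sigma j) (sigma j)"
  have sub: "?s ` (inversions k r - ?J) \<subseteq> inversions k (r \<circ> sigma j) - ?J" for r
  proof
    fix u assume "u \<in> ?s ` (inversions k r - ?J)"
    then obtain x y where u: "u = (sigma j x, sigma j y)"
      and xy: "(x, y) \<in> inversions k r" "(x, y) \<noteq> (j, Suc j)"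
      by auto
    then have "sigma j x < sigma j y"
      by (simp add: inversions_def sigma_less_sigma)
    moreover have "sigma j y < k" "(sigma j x, sigma j y) \<noteq> (j, Suc j)"
      using xy j by (auto simp: inversions_def sigma_def Transposition.transpose_def)
    ultimately show "u \<in> inversions k (r \<circ> sigma j) - ?J"
      using xy u by (simp add: inversions_def)
  qed
  have ss: "?s (?s u) = u" for u
    by (cases u) simp
  have "inversions k (p \<circ> sigma j) - ?J = ?s ` ?s ` (inversions k (p \<circ> sigma j) - ?J)"
    by (simp add: image_image ss)
  also have "\<dots> \<subseteq> ?s ` (inversions k p - ?J)"
    using sub[of "p \<circ> sigma j"] by (intro image_mono) simp
  finally have "inversions k (p \<circ> sigma j) - ?J = ?s ` (inversions k p - ?J)"
    using sub[of p] by blast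
  moreover have "inj ?s"
    by (rule inj_on_inverseI[where g = ?s]) (rule ss)
  ultimately have same: "card (inversions k (p \<circ> sigma j) - ?J) = card (inversions k p - ?J)"
    by (simp add: card_image inj_on_subset)
  have split: "card A = card (A - ?J) + (if (j, Suc j) \<in> A then 1 else 0)" if "finite A" for A
    using card.remove[OF that, of "(j, Suc j)"] by auto
  have "(j, Suc j) \<in> inversions k p \<longleftrightarrow> p (Suc j) < p j"
    "(j, Suc j) \<in> inversions k (p \<circ> sigma j) \<longleftrightarrow> p j < p (Suc j)"
    using j by (auto simp: inversions_def sigma_def)
  then show ?thesis
    using split[OF finite_inversions, of k p] split[OF finite_inversions, of k "p \<circ> sigma j"] same
    by simp
qed

lemma card_inversions_le_length:
  "valid_word k is \<Longrightarrow> card (inversions k (word_perm is)) \<le> length is"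
proof (induction "is" rule: rev_induct)
  case Nil
  then show ?case
    using inversions_id[of k] by (simp add: id_def)
next
  case (snoc j "is")
  then have "Suc j < k" "card (inversions k (word_perm is)) \<le> length is"
    by simp_all
  then show ?case
    using card_inversions_comp_sigma[of j k "word_perm is"]
    by (simp add: word_perm_snoc del: comp_apply split: if_splits)
qed

lemma ex_descent:
  assumes p: "p permutes {..<k}" and "p \<noteq> id"
  shows "\<exists>j. Suc j < k \<and> p (Suc j) < p j"
proof (rule ccontr)
  assume "\<nexists>j. Suc j < k \<and> p (Suc j) < p j"
  moreover have "p j \<noteq> p (Suc j)" for j
    using permutes_inj[OF p] by (simp add: inj_eq)
  ultimately have asc: "p j < p (Suc j)" if "Suc j < k" for j
    using that by (meson linorder_neqE_nat)
  have "i \<le> p i" if "i < k" for i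
    using that by (induction i) (auto dest!: asc)
  then have "p = id"
    using permutes_natset_ge[OF p] by blast
  with \<open>p \<noteq> id\<close> show False ..
qed

lemma ex_word_length_card_inversions:
  "p permutes {..<k} \<Longrightarrow>
     \<exists>is. valid_word k is \<and> word_perm is = p \<and> length is = card (inversions k p)"
proof (induction "card (inversions k p)" arbitrary: p rule: less_induct)
  case less
  show ?case
  proof (cases "p = id")
    case True
    then show ?thesis
      by (intro exI[of _ "[]"]) (simp add: valid_word_def)
  next
    case False
    then obtain j where j: "Suc j < k" "p (Suc j) < p j"
      using ex_descent[OF less.prems] by blast
    then have card: "card (inversions k (p \<circ> sigma j)) + 1 = card (inversions k p)"
      using card_inversions_comp_sigma[OF j(1), of p] by simp
    have "p \<circ> sigma j permutes {..<k}"
      by (rule permutes_compose[OF sigma_permutes[OF j(1)] less.prems])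
    moreover have "card (inversions k (p \<circ> sigma j)) < card (inversions k p)"
      using card by simp
    ultimately obtain "is" where
      "valid_word k is" "word_perm is = p \<circ> sigma j" "length is = card (inversions k (p \<circ> sigma j))"
      using less.hyps by blast
    with j card show ?thesis
      by (intro exI[of _ "is @ [j]"]) (simp add: word_perm_snoc o_assoc)
  qed
qed

lemma reduced_word_snocD:
  assumes red: "reduced_word k (is @ [j]) \<pi>"
  shows "reduced_word k is (\<pi> \<circ> sigma j)" and "word_perm is j < word_perm is (Suc j)"
proof -
  have "valid_word k is" "Suc j < k" and \<pi>: "\<pi> = word_perm is \<circ> sigma j"
    using red by (auto simp: reduced_word_def word_perm_snoc)
  show "reduced_word k is (\<pi> \<circ> sigma j)"
    unfolding reduced_word_def
  proof (intro conjI allI impI)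
    fix js assume js: "valid_word k js \<and> word_perm js = \<pi> \<circ> sigma j"
    then have "valid_word k (js @ [j]) \<and> word_perm (js @ [j]) = \<pi>"
      using \<open>Suc j < k\<close> by (simp add: word_perm_snoc)
    then have "length (is @ [j]) \<le> length (js @ [j])"
      using red unfolding reduced_word_def by blast
    then show "length is \<le> length js"
      by simp
  qed (simp_all add: \<pi> \<open>valid_word k is\<close>)
  let ?p = "word_perm is"
  have "?p permutes {..<k}"
    using \<open>valid_word k is\<close> by (rule word_perm_permutes)
  then have "?p j \<noteq> ?p (Suc j)"
    by (simp add: permutes_inj inj_eq)
  moreover have "\<not> ?p (Suc j) < ?p j"
  proof
    assume "?p (Suc j) < ?p j"
    then have shorter: "card (inversions k \<pi>) < length (is @ [j])"
      using card_inversions_comp_sigma[OF \<open>Suc j < k\<close>, of ?p]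
        card_inversions_le_length[OF \<open>valid_word k is\<close>] by (simp add: \<pi>)
    have "\<pi> permutes {..<k}"
      unfolding \<pi> by (rule permutes_compose[OF sigma_permutes[OF \<open>Suc j < k\<close>] \<open>?p permutes {..<k}\<close>])
    then obtain js where "valid_word k js" "word_perm js = \<pi>" "length js = card (inversions k \<pi>)"
      using ex_word_length_card_inversions by blast
    moreover have "length (is @ [j]) \<le> length js"
      using red \<open>valid_word k js\<close> \<open>word_perm js = \<pi>\<close> unfolding reduced_word_def by blast
    ultimately show False
      using shorter by simp
  qed
  ultimately show "?p j < ?p (Suc j)"
    by simp
qed

section \<open>The coefficients of a product of operators T_i\<close>

definition swap_coeff :: "real \<Rightarrow> nat \<Rightarrow> (nat \<Rightarrow> complex) \<Rightarrow> complex" where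
  "swap_coeff q i w = (w (Suc i) - of_real q * w i) / (w (Suc i) - w i)"

lemma T_op_eq_swap_coeff:
  "T_op q i f w = (of_real q - swap_coeff q i w) * f w + swap_coeff q i w * f (w \<circ> sigma i)"
  unfolding T_op_def swap_coeff_def[symmetric] by (simp add: algebra_simps)

lemma T_word_append: "T_word q (is @ js) f = T_word q is (T_word q js f)"
  by (induction "is") auto

text \<open>Since t_rho T_j = T_j' t_rho, where T_j' has the coefficients of T_j evaluated at w o rho,
  the coefficients of T_is T_j are obtained from those of T_is by this recursion.\<close>
definition T_word_coeff :: "real \<Rightarrow> nat list \<Rightarrow> (nat \<Rightarrow> nat) \<Rightarrow> (nat \<Rightarrow> complex) \<Rightarrow> complex" where
  "T_word_coeff q is = foldl
     (\<lambda>c j \<rho> w. c \<rho> w * (of_real q - swap_coeff q j (w \<circ> \<rho>))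
                + c (\<rho> \<circ> sigma j) w * swap_coeff q j (w \<circ> \<rho> \<circ> sigma j))
     (\<lambda>\<rho> w. if \<rho> = id then 1 else 0) is"

lemma T_word_coeff_Nil: "T_word_coeff q [] \<rho> w = (if \<rho> = id then 1 else 0)"
  by (simp add: T_word_coeff_def)

lemma T_word_coeff_snoc:
  "T_word_coeff q (is @ [j]) \<rho> w =
     T_word_coeff q is \<rho> w * (of_real q - swap_coeff q j (w \<circ> \<rho>))
     + T_word_coeff q is (\<rho> \<circ> sigma j) w * swap_coeff q j (w \<circ> \<rho> \<circ> sigma j)"
  by (simp add: T_word_coeff_def)

lemma T_word_coeff_eq_0_if_not_permutes:
  assumes "valid_word k is" "\<not> \<rho> permutes {..<k}"
  shows "T_word_coeff q is \<rho> w = 0"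
  using assms
proof (induction "is" arbitrary: \<rho> rule: rev_induct)
  case Nil
  then show ?case by (metis T_word_coeff_Nil permutes_id)
next
  case (snoc j "is")
  have "\<not> \<rho> \<circ> sigma j permutes {..<k}"
  proof
    assume "\<rho> \<circ> sigma j permutes {..<k}"
    moreover have "sigma j permutes {..<k}"
      using snoc.prems by (simp add: sigma_permutes)
    ultimately have "\<rho> \<circ> sigma j \<circ> sigma j permutes {..<k}"
      by (rule permutes_compose[rotated])
    with snoc.prems show False by simp
  qed
  with snoc show ?case by (simp add: T_word_coeff_snoc)
qed

lemma T_word_eq_sum_coeff:
  assumes "valid_word k is"
  shows "T_word q is f w = (\<Sum>\<tau> | \<tau> permutes {..<k}. T_word_coeff q is \<tau> w * f (w \<circ> \<tau>))"
  using assms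
proof (induction "is" arbitrary: f rule: rev_induct)
  case Nil
  have "(\<Sum>\<tau> | \<tau> permutes {..<k}. T_word_coeff q [] \<tau> w * f (w \<circ> \<tau>))
      = (\<Sum>\<tau> | \<tau> permutes {..<k}. if \<tau> = id then f w else 0)"
    by (rule sum.cong) (auto simp: T_word_coeff_Nil)
  also have "\<dots> = f w"
    by (simp add: finite_permutations permutes_id)
  finally show ?case by (simp add: o_def)
next
  case (snoc j "is")
  let ?P = "{\<tau>. \<tau> permutes {..<k}}"
  let ?c = "T_word_coeff q is" and ?b = "swap_coeff q j"
  have j: "sigma j permutes {..<k}" using snoc.prems by (simp add: sigma_permutes)
  have "T_word q (is @ [j]) f w = T_word q is (T_op q j f) w"
    by (simp add: T_word_append)
  also have "\<dots> = (\<Sum>\<tau>\<in>?P. ?c \<tau> w * T_op q j f (w \<circ> \<tau>))"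
    by (rule snoc.IH) (use snoc.prems in simp)
  also have "\<dots> = (\<Sum>\<tau>\<in>?P. ?c \<tau> w * (of_real q - ?b (w \<circ> \<tau>)) * f (w \<circ> \<tau>))
      + (\<Sum>\<tau>\<in>?P. ?c \<tau> w * ?b (w \<circ> \<tau>) * f (w \<circ> \<tau> \<circ> sigma j))"
    unfolding T_op_eq_swap_coeff sum.distrib[symmetric] by (simp add: algebra_simps)
  also have "(\<Sum>\<tau>\<in>?P. ?c \<tau> w * ?b (w \<circ> \<tau>) * f (w \<circ> \<tau> \<circ> sigma j))
      = (\<Sum>\<tau>\<in>?P. ?c (\<tau> \<circ> sigma j) w * ?b (w \<circ> \<tau> \<circ> sigma j) * f (w \<circ> \<tau>))"
    by (subst sum_permutations_compose_right[OF j]) (simp add: o_assoc)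
  finally show ?case
    unfolding T_word_coeff_snoc sum.distrib[symmetric] by (simp add: algebra_simps o_def)
qed

lemma comp_permutes_eq_iff:
  assumes "inj_on w {..<k}" "\<tau> permutes {..<k}" "\<rho> permutes {..<k}"
  shows "w \<circ> \<tau> = w \<circ> \<rho> \<longleftrightarrow> \<tau> = \<rho>"
proof
  assume eq: "w \<circ> \<tau> = w \<circ> \<rho>"
  show "\<tau> = \<rho>"
  proof
    fix x
    show "\<tau> x = \<rho> x"
    proof (cases "x < k")
      case True
      then have "\<tau> x < k" "\<rho> x < k"
        using assms(2,3) by (auto dest: permutes_in_image)
      with eq assms(1) show ?thesis
        by (metis comp_apply inj_on_eq_iff lessThan_iff)
    qed (use assms(2,3) in \<open>simp add: permutes_not_in\<close>)
  qed
qed simp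

lemma kappa_eq_T_word_coeff:
  assumes "valid_word k is" and w: "inj_on w {..<k}"
  shows "kappa k q is \<rho> w = T_word_coeff q is \<rho> w"
proof -
  let ?P = "{\<tau>. \<tau> permutes {..<k}}"
  let ?coeffs = "\<lambda>c. (\<forall>\<tau>. \<not> \<tau> permutes {..<k} \<longrightarrow> c \<tau> = 0) \<and>
                      (\<forall>f. T_word q is f w = (\<Sum>\<tau>\<in>?P. c \<tau> * f (w \<circ> \<tau>)))"
  have coeffs: "?coeffs (\<lambda>\<tau>. T_word_coeff q is \<tau> w)"
    using T_word_coeff_eq_0_if_not_permutes T_word_eq_sum_coeff assms(1) by blast
  have unique: "c = (\<lambda>\<tau>. T_word_coeff q is \<tau> w)" if c: "?coeffs c" for c
  proof
    fix \<tau>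
    show "c \<tau> = T_word_coeff q is \<tau> w"
    proof (cases "\<tau> permutes {..<k}")
      case True
      define \<delta> where "\<delta> v = (if v = w \<circ> \<tau> then 1 else 0 :: complex)" for v
      have pick: "(\<Sum>\<sigma>\<in>?P. d \<sigma> * \<delta> (w \<circ> \<sigma>)) = d \<tau>" for d :: "(nat \<Rightarrow> nat) \<Rightarrow> complex"
      proof -
        have "(\<Sum>\<sigma>\<in>?P. d \<sigma> * \<delta> (w \<circ> \<sigma>)) = (\<Sum>\<sigma>\<in>?P. if \<sigma> = \<tau> then d \<sigma> else 0)"
          using True by (intro sum.cong) (auto simp: \<delta>_def comp_permutes_eq_iff[OF w])
        then show ?thesis
          using True by (simp add: finite_permutations)
      qed
      show ?thesis
        using c coeffs pick by metis
    qed (use c coeffs in auto)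
  qed
  from coeffs unique have "(THE c. ?coeffs c) = (\<lambda>\<tau>. T_word_coeff q is \<tau> w)"
    by (rule the_equality)
  then show ?thesis
    by (simp add: kappa_def)
qed

section \<open>Zeros of the coefficients\<close>

lemma T_word_coeff_vanishes_at_q_ratio:
  assumes "valid_word k is" "\<rho> permutes {..<k}" "a < b" "b < k" "inv \<rho> b < inv \<rho> a"
    and "w b = of_real q * w a"
  shows "T_word_coeff q is \<rho> w = 0"
  using assms
proof (induction "is" arbitrary: \<rho> rule: rev_induct)
  case Nil
  then show ?case by (auto simp: T_word_coeff_Nil)
next
  case (snoc j "is")
  have j: "Suc j < k" using snoc.prems by simp
  have "T_word_coeff q is (\<rho> \<circ> sigma j) w * swap_coeff q j (w \<circ> \<rho> \<circ> sigma j) = 0"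
  proof (cases "sigma j (inv \<rho> b) < sigma j (inv \<rho> a)")
    case True
    then have "inv (\<rho> \<circ> sigma j) b < inv (\<rho> \<circ> sigma j) a"
      using snoc.prems by (simp add: inv_comp_sigma)
    with snoc j show ?thesis
      by (simp add: permutes_compose[OF sigma_permutes])
  next
    case False
    with snoc.prems(5) have "inv \<rho> b = j" "inv \<rho> a = Suc j"
      using sigma_less_sigma by fastforce+
    then have "\<rho> j = b" "\<rho> (Suc j) = a"
      using snoc.prems(2) by (auto simp: permutes_inv_eq)
    then show ?thesis
      using snoc.prems(6) by (simp add: swap_coeff_def sigma_def)
  qed
  with snoc show ?case
    by (simp add: T_word_coeff_snoc)
qed

lemma swap_coeff_eq_q: "v (Suc j) = 0 \<Longrightarrow> v j \<noteq> 0 \<Longrightarrow> swap_coeff q j v = of_real q"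
  by (simp add: swap_coeff_def)

lemma T_word_coeff_vanishes_at_zero:
  assumes "reduced_word k is \<pi>" "\<rho> permutes {..<k}" "a < k" "\<pi> (inv \<rho> a) < a"
    and "inj_on w {..<k}" "w a = 0"
  shows "T_word_coeff q is \<rho> w = 0"
  using assms
proof (induction "is" arbitrary: \<pi> \<rho> rule: rev_induct)
  case Nil
  then have "\<rho> \<noteq> id"
    by (auto simp: reduced_word_def)
  then show ?case
    by (simp add: T_word_coeff_Nil)
next
  case (snoc j "is")
  let ?y = "inv \<rho> a"
  have red: "reduced_word k is (\<pi> \<circ> sigma j)" and asc: "\<pi> (Suc j) < \<pi> j"
    using reduced_word_snocD[OF snoc.prems(1)] by (auto simp: reduced_word_def)
  have j: "Suc j < k"
    using snoc.prems(1) by (simp add: reduced_word_def)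
  have "T_word_coeff q is (\<rho> \<circ> sigma j) w = 0"
  proof (rule snoc.IH[OF red _ snoc.prems(3) _ snoc.prems(5,6)])
    show "\<rho> \<circ> sigma j permutes {..<k}"
      by (rule permutes_compose[OF sigma_permutes[OF j] snoc.prems(2)])
    show "(\<pi> \<circ> sigma j) (inv (\<rho> \<circ> sigma j) a) < a"
      using snoc.prems(2,4) by (simp add: inv_comp_sigma)
  qed
  moreover have "T_word_coeff q is \<rho> w * (of_real q - swap_coeff q j (w \<circ> \<rho>)) = 0"
  proof (cases "?y = Suc j")
    case True
    then have \<rho>: "\<rho> (Suc j) = a"
      using snoc.prems(2) by (simp add: permutes_inv_eq)
    have "\<rho> j \<noteq> \<rho> (Suc j)" "\<rho> j < k"
      using snoc.prems(2) j permutes_in_image[OF snoc.prems(2), of j] by (simp_all add: permutes_inj inj_eq)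
    then have "w (\<rho> j) \<noteq> w a"
      using snoc.prems(3) \<rho> by (simp add: inj_on_eq_iff[OF snoc.prems(5)])
    then show ?thesis
      using \<rho> snoc.prems(6) by (simp add: swap_coeff_eq_q)
  next
    case False
    have "(\<pi> \<circ> sigma j) ?y < a"
      using False asc snoc.prems(4)
      by (cases "?y = j") (auto simp: sigma_def Transposition.transpose_def)
    then show ?thesis
      using snoc.IH[OF red snoc.prems(2,3) _ snoc.prems(5,6)] by simp
  qed
  ultimately show ?case
    by (simp add: T_word_coeff_snoc)
qed

section \<open>Behaviour at infinity\<close>

lemma tendsto_linear_fraction_at_infinity:
  fixes \<alpha> \<beta> \<gamma> \<delta> :: "'a::real_normed_field"
  assumes "\<gamma> \<noteq> 0"
  shows "((\<lambda>z. (\<alpha> * z + \<beta>) / (\<gamma> * z + \<delta>)) \<longlongrightarrow> \<alpha> / \<gamma>) at_infinity"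
proof (rule Lim_transform_eventually)
  have "((\<lambda>z. (\<alpha> + \<beta> / z) / (\<gamma> + \<delta> / z)) \<longlongrightarrow> (\<alpha> + 0) / (\<gamma> + 0)) at_infinity"
    using assms by (intro tendsto_intros tendsto_divide_0[OF tendsto_const filterlim_ident]) simp
  then show "((\<lambda>z. (\<alpha> + \<beta> / z) / (\<gamma> + \<delta> / z)) \<longlongrightarrow> \<alpha> / \<gamma>) at_infinity"
    by simp
  show "\<forall>\<^sub>F z in at_infinity. (\<alpha> + \<beta> / z) / (\<gamma> + \<delta> / z) = (\<alpha> * z + \<beta>) / (\<gamma> * z + \<delta>)"
    using eventually_not_equal_at_infinity[of 0]
    by eventually_elim (simp add: add_divide_eq_iff)
qed

lemma swap_coeff_upd_tendsto_q:
  assumes "g j = a" "g (Suc j) \<noteq> a"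
  shows "((\<lambda>z. swap_coeff q j (w(a := z) \<circ> g)) \<longlongrightarrow> of_real q) at_infinity"
proof -
  let ?c = "w (g (Suc j))"
  have "(\<lambda>z. swap_coeff q j (w(a := z) \<circ> g)) = (\<lambda>z. (- of_real q * z + ?c) / (- 1 * z + ?c))"
    using assms by (simp add: fun_eq_iff swap_coeff_def)
  then show ?thesis
    using tendsto_linear_fraction_at_infinity[of "- 1" "- of_real q" ?c ?c] by simp
qed

lemma swap_coeff_upd_tendsto_1:
  assumes "g (Suc j) = a" "g j \<noteq> a"
  shows "((\<lambda>z. swap_coeff q j (w(a := z) \<circ> g)) \<longlongrightarrow> 1) at_infinity"
proof -
  let ?c = "w (g j)"
  have "(\<lambda>z. swap_coeff q j (w(a := z) \<circ> g)) = (\<lambda>z. (1 * z + - of_real q * ?c) / (1 * z + - ?c))"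
    using assms by (simp add: fun_eq_iff swap_coeff_def)
  then show ?thesis
    using tendsto_linear_fraction_at_infinity[of 1 1 "- of_real q * ?c" "- ?c"] by simp
qed

lemma swap_coeff_upd_convergent:
  "\<exists>L. ((\<lambda>z. swap_coeff q j (w(a := z) \<circ> g)) \<longlongrightarrow> L) at_infinity"
proof -
  consider "g j = a" "g (Suc j) \<noteq> a" | "g j \<noteq> a" "g (Suc j) = a" | "g j = a \<longleftrightarrow> g (Suc j) = a"
    by blast
  then show ?thesis
  proof cases
    case 1
    then show ?thesis using swap_coeff_upd_tendsto_q[of g j a q w] by blast
  next
    case 2
    then show ?thesis using swap_coeff_upd_tendsto_1[of g j a q w] by blast
  next
    case 3
    \<comment> \<open>If g j = g (Suc j) = a, both sides are the junk value x / 0 = 0.\<close>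
    then have "(\<lambda>z. swap_coeff q j (w(a := z) \<circ> g)) = (\<lambda>z. swap_coeff q j (w \<circ> g))"
      by (auto simp: fun_eq_iff swap_coeff_def)
    then show ?thesis
      by (auto intro: tendsto_const)
  qed
qed

lemma T_word_coeff_upd_convergent:
  "\<exists>L. ((\<lambda>z. T_word_coeff q is \<rho> (w(a := z))) \<longlongrightarrow> L) at_infinity"
proof (induction "is" arbitrary: \<rho> rule: rev_induct)
  case Nil
  show ?case
    unfolding T_word_coeff_Nil by (rule exI, rule tendsto_const)
next
  case (snoc j "is")
  obtain L1 where l1: "((\<lambda>z. T_word_coeff q is \<rho> (w(a := z))) \<longlongrightarrow> L1) at_infinity"
    using snoc.IH[of \<rho>] by blast
  obtain L2 where l2: "((\<lambda>z. T_word_coeff q is (\<rho> \<circ> sigma j) (w(a := z))) \<longlongrightarrow> L2) at_infinity"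
    using snoc.IH[of "\<rho> \<circ> sigma j"] by blast
  obtain L3 where l3: "((\<lambda>z. swap_coeff q j (w(a := z) \<circ> \<rho>)) \<longlongrightarrow> L3) at_infinity"
    using swap_coeff_upd_convergent[of q j w a \<rho>] by blast
  obtain L4 where l4: "((\<lambda>z. swap_coeff q j (w(a := z) \<circ> (\<rho> \<circ> sigma j))) \<longlongrightarrow> L4) at_infinity"
    using swap_coeff_upd_convergent[of q j w a "\<rho> \<circ> sigma j"] by blast
  have "((\<lambda>z. T_word_coeff q (is @ [j]) \<rho> (w(a := z)))
      \<longlongrightarrow> L1 * (of_real q - L3) + L2 * L4) at_infinity"
    unfolding T_word_coeff_snoc o_assoc[symmetric]
    by (intro tendsto_add tendsto_mult tendsto_diff tendsto_const l1 l2 l3 l4)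
  then show ?case ..
qed

lemma T_word_coeff_upd_tendsto_0:
  assumes "reduced_word k is \<pi>" "\<rho> permutes {..<k}" "a < k" "a < \<pi> (inv \<rho> a)"
  shows "((\<lambda>z. T_word_coeff q is \<rho> (w(a := z))) \<longlongrightarrow> 0) at_infinity"
  using assms
proof (induction "is" arbitrary: \<pi> \<rho> rule: rev_induct)
  case Nil
  then have "\<rho> \<noteq> id"
    by (auto simp: reduced_word_def)
  then show ?case
    by (simp add: T_word_coeff_Nil)
next
  case (snoc j "is")
  let ?y = "inv \<rho> a"
  have red: "reduced_word k is (\<pi> \<circ> sigma j)" and asc: "\<pi> (Suc j) < \<pi> j"
    using reduced_word_snocD[OF snoc.prems(1)] by (auto simp: reduced_word_def)
  have j: "Suc j < k"
    using snoc.prems(1) by (simp add: reduced_word_def)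
  have swapped: "((\<lambda>z. T_word_coeff q is (\<rho> \<circ> sigma j) (w(a := z))) \<longlongrightarrow> 0) at_infinity"
  proof (rule snoc.IH[OF red _ snoc.prems(3)])
    show "\<rho> \<circ> sigma j permutes {..<k}"
      by (rule permutes_compose[OF sigma_permutes[OF j] snoc.prems(2)])
    show "a < (\<pi> \<circ> sigma j) (inv (\<rho> \<circ> sigma j) a)"
      using snoc.prems(2,4) by (simp add: inv_comp_sigma)
  qed
  obtain L where swap: "((\<lambda>z. swap_coeff q j (w(a := z) \<circ> \<rho> \<circ> sigma j)) \<longlongrightarrow> L) at_infinity"
    using swap_coeff_upd_convergent[of q j w a "\<rho> \<circ> sigma j"] unfolding o_assoc by blast
  have stay: "((\<lambda>z. T_word_coeff q is \<rho> (w(a := z))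
      * (of_real q - swap_coeff q j (w(a := z) \<circ> \<rho>))) \<longlongrightarrow> 0) at_infinity"
  proof (cases "?y = j")
    case True
    then have "\<rho> j = a" "\<rho> (Suc j) \<noteq> a"
      using snoc.prems(2) by (auto simp: permutes_inv_eq permutes_inj inj_eq)
    then have "((\<lambda>z. of_real q - swap_coeff q j (w(a := z) \<circ> \<rho>)) \<longlongrightarrow> of_real q - of_real q)
        at_infinity"
      by (intro tendsto_diff tendsto_const swap_coeff_upd_tendsto_q)
    moreover obtain L' where "((\<lambda>z. T_word_coeff q is \<rho> (w(a := z))) \<longlongrightarrow> L') at_infinity"
      using T_word_coeff_upd_convergent[of q "is" \<rho> w a] by blast
    ultimately have "((\<lambda>z. T_word_coeff q is \<rho> (w(a := z))
        * (of_real q - swap_coeff q j (w(a := z) \<circ> \<rho>))) \<longlongrightarrow> L' * (of_real q - of_real q)) at_infinity"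
      using tendsto_mult by blast
    then show ?thesis
      by simp
  next
    case False
    have "a < (\<pi> \<circ> sigma j) ?y"
      using False asc snoc.prems(4)
      by (cases "?y = Suc j") (auto simp: sigma_def Transposition.transpose_def)
    then have "((\<lambda>z. T_word_coeff q is \<rho> (w(a := z))) \<longlongrightarrow> 0) at_infinity"
      using snoc.IH[OF red snoc.prems(2,3)] by (simp add: fun_upd_def)
    moreover obtain L' where "((\<lambda>z. swap_coeff q j (w(a := z) \<circ> \<rho>)) \<longlongrightarrow> L') at_infinity"
      using swap_coeff_upd_convergent[of q j w a \<rho>] by blast
    then have "((\<lambda>z. of_real q - swap_coeff q j (w(a := z) \<circ> \<rho>)) \<longlongrightarrow> of_real q - L') at_infinity"
      by (rule tendsto_diff[OF tendsto_const])
    ultimately have "((\<lambda>z. T_word_coeff q is \<rho> (w(a := z))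
        * (of_real q - swap_coeff q j (w(a := z) \<circ> \<rho>))) \<longlongrightarrow> 0 * (of_real q - L')) at_infinity"
      using tendsto_mult by blast
    then show ?thesis
      by simp
  qed
  have "((\<lambda>z. T_word_coeff q (is @ [j]) \<rho> (w(a := z))) \<longlongrightarrow> 0 + 0 * L) at_infinity"
    unfolding T_word_coeff_snoc by (intro tendsto_add tendsto_mult stay swapped swap)
  then show ?case
    by (simp add: fun_upd_def)
qed

lemma eventually_inj_on_fun_upd_at_infinity:
  fixes w :: "'a \<Rightarrow> 'b::real_normed_vector"
  assumes "finite A" "inj_on w (A - {a})"
  shows "\<forall>\<^sub>F z in at_infinity. inj_on (w(a := z)) A"
proof -
  have "\<forall>\<^sub>F z in at_infinity. \<forall>b\<in>A - {a}. z \<noteq> w b"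
    using assms(1) by (intro eventually_ball_finite ballI eventually_not_equal_at_infinity) auto
  then show ?thesis
    by eventually_elim (use assms(2) in \<open>auto simp: inj_on_def\<close>)
qed

section \<open>Polynomial functions\<close>

inductive polyfun :: "'v set \<Rightarrow> (('v \<Rightarrow> 'a::comm_ring_1) \<Rightarrow> 'a) \<Rightarrow> bool" for V where
  polyfun_const: "polyfun V (\<lambda>x. c)"
| polyfun_var: "v \<in> V \<Longrightarrow> polyfun V (\<lambda>x. x v)"
| polyfun_add: "polyfun V p \<Longrightarrow> polyfun V r \<Longrightarrow> polyfun V (\<lambda>x. p x + r x)"
| polyfun_mult: "polyfun V p \<Longrightarrow> polyfun V r \<Longrightarrow> polyfun V (\<lambda>x. p x * r x)"

lemma polyfun_diff:
  assumes "polyfun V p" "polyfun V r"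
  shows "polyfun V (\<lambda>x. p x - r x)"
proof -
  have "polyfun V (\<lambda>x. p x + (- 1) * r x)"
    by (intro polyfun_add polyfun_mult polyfun_const assms)
  then show ?thesis
    by simp
qed

lemma polyfun_prod: "(\<And>i. i \<in> A \<Longrightarrow> polyfun V (p i)) \<Longrightarrow> polyfun V (\<lambda>x. \<Prod>i\<in>A. p i x)"
proof (induction A rule: infinite_finite_induct)
  case (insert i A)
  then show ?case
    using polyfun_mult[of V "p i"] by simp
qed (simp_all add: polyfun_const)

lemma polyfun_subst:
  assumes "polyfun V p" "\<And>v. v \<in> V \<Longrightarrow> polyfun W (\<lambda>y. s y v)"
  shows "polyfun W (\<lambda>y. p (s y))"
  using assms by induction (auto intro: polyfun.intros)

lemma polyfun_upd_factor:
  assumes "polyfun V p" "m \<in> V" "n \<in> V"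
  shows "\<exists>r. polyfun V r \<and> (\<forall>x. p x - p (x(m := x n)) = (x m - x n) * r x)"
  using assms
proof induction
  case (polyfun_const c)
  show ?case
    by (rule exI[of _ "\<lambda>x. 0"]) (simp add: polyfun.polyfun_const)
next
  case (polyfun_var v)
  show ?case
    by (rule exI[of _ "\<lambda>x. if v = m then 1 else 0"]) (auto intro: polyfun.polyfun_const)
next
  case (polyfun_add p1 p2)
  then obtain r1 r2 where r: "polyfun V r1" "\<forall>x. p1 x - p1 (x(m := x n)) = (x m - x n) * r1 x"
    "polyfun V r2" "\<forall>x. p2 x - p2 (x(m := x n)) = (x m - x n) * r2 x"
    by blast
  then have "polyfun V (\<lambda>x. r1 x + r2 x)"
    by (intro polyfun.polyfun_add)
  moreover have "p1 x + p2 x - (p1 (x(m := x n)) + p2 (x(m := x n))) = (x m - x n) * (r1 x + r2 x)" for x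
  proof -
    have "p1 x + p2 x - (p1 (x(m := x n)) + p2 (x(m := x n)))
        = (p1 x - p1 (x(m := x n))) + (p2 x - p2 (x(m := x n)))"
      by (simp add: algebra_simps)
    then show ?thesis
      using r by (simp add: algebra_simps)
  qed
  ultimately show ?case
    by blast
next
  case (polyfun_mult p1 p2)
  then obtain r1 r2 where r: "polyfun V r1" "\<forall>x. p1 x - p1 (x(m := x n)) = (x m - x n) * r1 x"
    "polyfun V r2" "\<forall>x. p2 x - p2 (x(m := x n)) = (x m - x n) * r2 x"
    by blast
  have "polyfun V (\<lambda>x. (x(m := x n)) v)" if "v \<in> V" for v
    using that polyfun_mult.prems by (cases "v = m") (simp_all add: polyfun.polyfun_var)
  then have "polyfun V (\<lambda>x. p1 (x(m := x n)))"
    by (rule polyfun_subst[OF polyfun_mult.hyps(1)])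
  then have "polyfun V (\<lambda>x. r1 x * p2 x + p1 (x(m := x n)) * r2 x)"
    using r polyfun_mult.hyps by (intro polyfun.polyfun_add polyfun.polyfun_mult)
  moreover have "p1 x * p2 x - p1 (x(m := x n)) * p2 (x(m := x n))
      = (x m - x n) * (r1 x * p2 x + p1 (x(m := x n)) * r2 x)" for x
  proof -
    have "p1 x * p2 x - p1 (x(m := x n)) * p2 (x(m := x n))
        = (p1 x - p1 (x(m := x n))) * p2 x + p1 (x(m := x n)) * (p2 x - p2 (x(m := x n)))"
      by (simp add: algebra_simps)
    then show ?thesis
      using r by (simp add: algebra_simps)
  qed
  ultimately show ?case
    by blast
qed

lemma polyfun_vanishing_factor:
  assumes "polyfun V p" "m \<in> V" "n \<in> V" "\<And>x. x m = x n \<Longrightarrow> p x = 0"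
  shows "\<exists>r. polyfun V r \<and> (\<forall>x. p x = (x m - x n) * r x)"
  using polyfun_upd_factor[OF assms(1-3)] assms(4) by fastforce

lemma polyfun_monomial_sum:
  fixes p :: "('v \<Rightarrow> 'a::comm_ring_1) \<Rightarrow> 'a"
  assumes "finite V" "polyfun V p"
  shows "\<exists>E c. finite E \<and> (\<forall>x. p x = (\<Sum>e\<in>E. c e * (\<Prod>v\<in>V. x v ^ e v)))"
  using assms(2)
proof induction
  case (polyfun_const c)
  show ?case
    by (intro exI[of _ "{\<lambda>_. 0}"] exI[of _ "\<lambda>_. c"]) simp
next
  case (polyfun_var v)
  have "(\<Prod>u\<in>V. x u ^ ((\<lambda>_. 0)(v := 1)) u) = x v" for x :: "_ \<Rightarrow> 'a"
  proof -
    have "(\<Prod>u\<in>V. x u ^ ((\<lambda>_. 0)(v := 1)) u) = (\<Prod>u\<in>V. if u = v then x u else 1)"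
      by (rule prod.cong) auto
    then show ?thesis
      using assms(1) polyfun_var by simp
  qed
  then show ?case
    by (intro exI[of _ "{(\<lambda>_. 0)(v := 1)}"] exI[of _ "\<lambda>_. 1"]) simp
next
  case (polyfun_add p r)
  then obtain E1 c1 E2 c2 where E: "finite E1" "finite E2"
    and p: "\<And>x. p x = (\<Sum>e\<in>E1. c1 e * (\<Prod>v\<in>V. x v ^ e v))"
    and r: "\<And>x. r x = (\<Sum>e\<in>E2. c2 e * (\<Prod>v\<in>V. x v ^ e v))"
    by blast
  define c where "c e = (if e \<in> E1 then c1 e else 0) + (if e \<in> E2 then c2 e else 0)" for e
  have "p x + r x = (\<Sum>e\<in>E1 \<union> E2. c e * (\<Prod>v\<in>V. x v ^ e v))" for x
  proof -
    have "(\<Sum>e\<in>E1 \<union> E2. c e * (\<Prod>v\<in>V. x v ^ e v))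
        = (\<Sum>e\<in>E1 \<union> E2. (if e \<in> E1 then c1 e * (\<Prod>v\<in>V. x v ^ e v) else 0)
            + (if e \<in> E2 then c2 e * (\<Prod>v\<in>V. x v ^ e v) else 0))"
      by (rule sum.cong) (simp_all add: c_def distrib_right)
    also have "\<dots> = (\<Sum>e\<in>E1 \<union> E2. if e \<in> E1 then c1 e * (\<Prod>v\<in>V. x v ^ e v) else 0)
          + (\<Sum>e\<in>E1 \<union> E2. if e \<in> E2 then c2 e * (\<Prod>v\<in>V. x v ^ e v) else 0)"
      by (rule sum.distrib)
    also have "\<dots> = p x + r x"
      using E by (simp add: sum.inter_restrict[symmetric] p r Int_absorb1)
    finally show ?thesis ..
  qed
  with E show ?case
    by blast
next
  case (polyfun_mult p r)
  then obtain E1 c1 E2 c2 where E: "finite E1" "finite E2"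
    and p: "\<And>x. p x = (\<Sum>e\<in>E1. c1 e * (\<Prod>v\<in>V. x v ^ e v))"
    and r: "\<And>x. r x = (\<Sum>e\<in>E2. c2 e * (\<Prod>v\<in>V. x v ^ e v))"
    by blast
  define add where "add d = (\<lambda>v. fst d v + snd d v)" for d :: "('v \<Rightarrow> nat) \<times> ('v \<Rightarrow> nat)"
  define c where "c e = (\<Sum>d\<in>{d \<in> E1 \<times> E2. add d = e}. c1 (fst d) * c2 (snd d))" for e
  have "p x * r x = (\<Sum>e\<in>add ` (E1 \<times> E2). c e * (\<Prod>v\<in>V. x v ^ e v))" for x
  proof -
    let ?m = "\<lambda>e. \<Prod>v\<in>V. x v ^ e v"
    have "p x * r x = (\<Sum>d\<in>E1 \<times> E2. c1 (fst d) * c2 (snd d) * ?m (add d))"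
      by (simp add: p r sum_product sum.cartesian_product add_def power_add prod.distrib
          algebra_simps case_prod_beta)
    also have "\<dots> = (\<Sum>e\<in>add ` (E1 \<times> E2). \<Sum>d\<in>{d \<in> E1 \<times> E2. add d = e}. c1 (fst d) * c2 (snd d) * ?m (add d))"
      using E by (intro sum.image_gen) simp
    also have "\<dots> = (\<Sum>e\<in>add ` (E1 \<times> E2). c e * ?m e)"
      by (simp add: c_def sum_distrib_right)
    finally show ?thesis .
  qed
  with E show ?case
    by (intro exI[of _ "add ` (E1 \<times> E2)"] exI[of _ c]) simp
qed

section \<open>Simple poles\<close>

lemma case_sum_comp_sigma:
  "case_sum (x \<circ> sigma i) y = case_sum x y \<circ> map_sum (sigma i) id"
  by (auto simp: fun_eq_iff split: sum.split)

lemma inj_on_comp_sigma: "Suc i < k \<Longrightarrow> inj_on x {..<k} \<Longrightarrow> inj_on (x \<circ> sigma i) {..<k}"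
  by (simp add: comp_inj_on permutes_image[OF sigma_permutes] permutes_inj_on[OF sigma_permutes])

text \<open>Variables Inl i are the arguments x_i on which T acts, variables Inr j are parameters.\<close>
lemma T_word_polyfun:
  fixes p :: "(nat + 'b \<Rightarrow> complex) \<Rightarrow> complex"
  assumes "valid_word k is" "polyfun V p" "Inl ` {..<k} \<subseteq> V"
  shows "\<exists>r. polyfun V r \<and>
    (\<forall>x y. inj_on x {..<k} \<longrightarrow> T_word q is (\<lambda>x. p (case_sum x y)) x = r (case_sum x y))"
  using assms(1)
proof (induction "is")
  case Nil
  then show ?case
    using assms(2) by auto
next
  case (Cons i "is")
  have i: "Suc i < k" "valid_word k is"
    using Cons.prems by (auto simp: valid_word_def)
  obtain r where r: "polyfun V r"
    and T_r: "\<And>x y. inj_on x {..<k} \<Longrightarrow> T_word q is (\<lambda>x. p (case_sum x y)) x = r (case_sum x y)"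
    using Cons.IH[OF i(2)] by blast
  let ?sw = "map_sum (sigma i) (id :: 'b \<Rightarrow> 'b)"
  have "polyfun V (\<lambda>z. r (z \<circ> ?sw))"
  proof (rule polyfun_subst[OF r])
    fix v assume "v \<in> V"
    then have "?sw v \<in> V"
      using assms(3) i(1) by (cases v) (auto simp: sigma_def Transposition.transpose_def)
    then show "polyfun V (\<lambda>z. (z \<circ> ?sw) v)"
      by (simp add: polyfun_var)
  qed
  then have diff: "polyfun V (\<lambda>z. r (z \<circ> ?sw) - r z)"
    using r by (rule polyfun_diff)
  have vars: "Inl (Suc i) \<in> V" "Inl i \<in> V"
    using assms(3) i(1) by auto
  have vanish: "r (z \<circ> ?sw) - r z = 0" if "z (Inl (Suc i)) = z (Inl i)" for z :: "nat + 'b \<Rightarrow> complex"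
  proof -
    have "(z \<circ> ?sw) v = z v" for v
      using that by (cases v) (auto simp: sigma_def Transposition.transpose_def)
    then show ?thesis
      by (simp add: comp_def)
  qed
  obtain f where f: "polyfun V f"
    and r_sw: "\<And>z. r (z \<circ> ?sw) - r z = (z (Inl (Suc i)) - z (Inl i)) * f z"
    using polyfun_vanishing_factor[OF diff vars vanish] by blast
  define r' where "r' z = of_real q * r z + (z (Inl (Suc i)) - of_real q * z (Inl i)) * f z" for z
  have "polyfun V r'"
    unfolding r'_def[abs_def] using assms(3) i(1)
    by (intro polyfun_add polyfun_mult polyfun_diff polyfun_const polyfun_var r f) auto
  moreover have "T_word q (i # is) (\<lambda>x. p (case_sum x y)) x = r' (case_sum x y)"
    if x: "inj_on x {..<k}" for x y
  proof -
    have "x (Suc i) \<noteq> x i"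
      using x i(1) by (auto dest: inj_onD)
    moreover have "T_word q is (\<lambda>x. p (case_sum x y)) (x \<circ> sigma i) - T_word q is (\<lambda>x. p (case_sum x y)) x
        = (x (Suc i) - x i) * f (case_sum x y)"
      using r_sw[of "case_sum x y"]
      by (simp add: T_r x inj_on_comp_sigma[OF i(1) x] case_sum_comp_sigma)
    ultimately show ?thesis
      by (simp add: T_op_def r'_def T_r x)
  qed
  ultimately show ?case
    by blast
qed

lemma Vandermonde_comp_inv:
  fixes w :: "nat \<Rightarrow> 'a::comm_ring_1"
  assumes "\<tau> permutes {..<k}" "\<rho> permutes {..<k}"
  shows "(\<Prod>j<k. \<Prod>i<j. w (\<tau> (inv \<rho> j)) - w i) = (if \<tau> = \<rho> then (\<Prod>j<k. \<Prod>i<j. w j - w i) else 0)"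
proof (cases "\<tau> = \<rho>")
  case True
  then show ?thesis
    using assms(2) by (simp add: permutes_inverses)
next
  case False
  let ?\<mu> = "\<tau> \<circ> inv \<rho>"
  have "?\<mu> permutes {..<k}"
    using assms by (simp add: permutes_compose permutes_inv)
  moreover have "?\<mu> \<noteq> id"
  proof
    assume "?\<mu> = id"
    then have "?\<mu> \<circ> \<rho> = \<rho>"
      by simp
    with assms(2) False show False
      by (simp add: o_assoc[symmetric] permutes_inv_o(2))
  qed
  ultimately have "\<not> (\<forall>i\<in>{..<k}. i \<le> ?\<mu> i)"
    using permutes_natset_ge by blast
  then obtain j where "j < k" "?\<mu> j < j"
    by (auto simp: not_le)
  then have "(\<Prod>i<j. w (\<tau> (inv \<rho> j)) - w i) = 0"
    by (intro prod_zero bexI[of _ "?\<mu> j"]) auto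
  with \<open>j < k\<close> False show ?thesis
    by (auto intro!: prod_zero)
qed

lemma Vandermonde_mult_T_word_coeff_polyfun:
  assumes "valid_word k is" "\<rho> permutes {..<k}"
  shows "\<exists>r. polyfun {..<k} r \<and>
    (\<forall>w. inj_on w {..<k} \<longrightarrow> (\<Prod>j<k. \<Prod>i<j. w j - w i) * T_word_coeff q is \<rho> w = r w)"
proof -
  define V :: "(nat + nat) set" where "V = Inl ` {..<k} \<union> Inr ` {..<k}"
  define p :: "(nat + nat \<Rightarrow> complex) \<Rightarrow> complex"
    where "p z = (\<Prod>j<k. \<Prod>i<j. z (Inl (inv \<rho> j)) - z (Inr i))" for z
  have "inv \<rho> j < k" if "j < k" for j
    using that permutes_in_image[OF permutes_inv[OF assms(2)]] by simp
  then have "polyfun V p"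
    unfolding p_def[abs_def] V_def by (intro polyfun_prod polyfun_diff polyfun_var) auto
  then obtain r where r: "polyfun V r"
    and T_r: "\<And>x y. inj_on x {..<k} \<Longrightarrow> T_word q is (\<lambda>x. p (case_sum x y)) x = r (case_sum x y)"
    using T_word_polyfun[OF assms(1)] V_def by blast
  show ?thesis
  proof (intro exI conjI allI impI)
    show "polyfun {..<k} (\<lambda>w. r (case_sum w w))"
      by (rule polyfun_subst[OF r]) (auto simp: V_def intro: polyfun_var)
    fix w :: "nat \<Rightarrow> complex"
    assume w: "inj_on w {..<k}"
    have "r (case_sum w w) = T_word q is (\<lambda>x. p (case_sum x w)) w"
      by (simp add: T_r w)
    also have "\<dots> = (\<Sum>\<tau> | \<tau> permutes {..<k}. T_word_coeff q is \<tau> w * p (case_sum (w \<circ> \<tau>) w))"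
      by (rule T_word_eq_sum_coeff[OF assms(1)])
    also have "\<dots> = (\<Sum>\<tau> | \<tau> permutes {..<k}.
        if \<tau> = \<rho> then T_word_coeff q is \<rho> w * (\<Prod>j<k. \<Prod>i<j. w j - w i) else 0)"
      using assms(2) by (intro sum.cong) (auto simp: p_def Vandermonde_comp_inv)
    also have "\<dots> = T_word_coeff q is \<rho> w * (\<Prod>j<k. \<Prod>i<j. w j - w i)"
      using assms(2) by (simp add: finite_permutations)
    finally show "(\<Prod>j<k. \<Prod>i<j. w j - w i) * T_word_coeff q is \<rho> w = r (case_sum w w)"
      by (simp add: mult.commute)
  qed
qed

theorem proposition3p3:
  fixes k :: nat and q :: real and \<pi> \<rho> :: "nat \<Rightarrow> nat" and "is" :: "nat list"
  assumes q: "0 < q" "q < 1"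
    and pi: "\<pi> permutes {..<k}" and rho: "\<rho> permutes {..<k}"
    and red: "reduced_word k is \<pi>"
  shows
    "(\<exists>E c. finite E \<and>
        (\<forall>w. inj_on w {..<k} \<longrightarrow>
           (\<Prod>j<k. \<Prod>i<j. (w j - w i)) * kappa k q is \<rho> w
             = (\<Sum>e\<in>E. c e * (\<Prod>i<k. w i ^ e i))))
     \<and> (\<forall>a b w. a < b \<and> b < k \<and> inv \<rho> a > inv \<rho> b \<and> inj_on w {..<k}
           \<and> w b = of_real q * w a \<longrightarrow> kappa k q is \<rho> w = 0)
     \<and> (\<forall>a w. a < k \<and> \<pi> (inv \<rho> a) < a \<and> inj_on w {..<k} \<and> w a = 0
           \<longrightarrow> kappa k q is \<rho> w = 0)
     \<and> (\<forall>a w. a < k \<and> \<pi> (inv \<rho> a) > a \<and> inj_on w ({..<k} - {a})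
           \<longrightarrow> ((\<lambda>z. kappa k q is \<rho> (w(a := z))) \<longlongrightarrow> 0) at_infinity)"
proof -
  have valid: "valid_word k is"
    using red by (simp add: reduced_word_def)
  show ?thesis
  proof (intro conjI allI impI)
    obtain r where "polyfun {..<k} r"
      and r: "\<And>w. inj_on w {..<k} \<Longrightarrow> (\<Prod>j<k. \<Prod>i<j. w j - w i) * T_word_coeff q is \<rho> w = r w"
      using Vandermonde_mult_T_word_coeff_polyfun[OF valid rho] by blast
    then obtain E c where "finite E" "\<And>w. r w = (\<Sum>e\<in>E. c e * (\<Prod>i<k. w i ^ e i))"
      using polyfun_monomial_sum[of "{..<k}" r] by auto
    then show "\<exists>E c. finite E \<and> (\<forall>w. inj_on w {..<k} \<longrightarrow>
        (\<Prod>j<k. \<Prod>i<j. w j - w i) * kappa k q is \<rho> w = (\<Sum>e\<in>E. c e * (\<Prod>i<k. w i ^ e i)))"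
      using r by (auto simp: kappa_eq_T_word_coeff[OF valid])
  next
    fix a b :: nat and w :: "nat \<Rightarrow> complex"
    assume "a < b \<and> b < k \<and> inv \<rho> b < inv \<rho> a \<and> inj_on w {..<k} \<and> w b = of_real q * w a"
    then show "kappa k q is \<rho> w = 0"
      by (auto simp: kappa_eq_T_word_coeff[OF valid] intro: T_word_coeff_vanishes_at_q_ratio[OF valid rho])
  next
    fix a :: nat and w :: "nat \<Rightarrow> complex"
    assume "a < k \<and> \<pi> (inv \<rho> a) < a \<and> inj_on w {..<k} \<and> w a = 0"
    then show "kappa k q is \<rho> w = 0"
      by (auto simp: kappa_eq_T_word_coeff[OF valid] intro: T_word_coeff_vanishes_at_zero[OF red rho])
  next
    fix a :: nat and w :: "nat \<Rightarrow> complex"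
    assume a: "a < k \<and> a < \<pi> (inv \<rho> a) \<and> inj_on w ({..<k} - {a})"
    have "((\<lambda>z. T_word_coeff q is \<rho> (w(a := z))) \<longlongrightarrow> 0) at_infinity"
      using a by (intro T_word_coeff_upd_tendsto_0[OF red rho]) auto
    moreover have "\<forall>\<^sub>F z in at_infinity. T_word_coeff q is \<rho> (w(a := z)) = kappa k q is \<rho> (w(a := z))"
      using eventually_inj_on_fun_upd_at_infinity[of "{..<k}" w a] a
      by (auto elim!: eventually_mono simp: kappa_eq_T_word_coeff[OF valid])
    ultimately show "((\<lambda>z. kappa k q is \<rho> (w(a := z))) \<longlongrightarrow> 0) at_infinity"
      by (rule Lim_transform_eventually)
  qed
qed

end
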